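(* Let $P(D)=\sum_{|\alpha|\le m}a_\alpha\partial^\alpha$ be a partial differential operator with constant coefficients $a_\alpha\in\mathbb C$ on $\Omega=(0,1)^n$. Then $P(D)$ is an $L_h$-Fourier multiplier for every $h\in\mathbb R^n_+$.
   Context: $\mathbb R^n_+=\{h\in\mathbb R^n: h_j>0\ \forall j\}$. For $h\in\mathbb R^n_+$, $L_h$ is the Laplacian on $\Omega=(0,1)^n$ with boundary conditions $h_jf(x)|_{x_j=0}=f(x)|_{x_j=1}$, $h_j\partial_{x_j}f(x)|_{x_j=0}=\partial_{x_j}f(x)|_{x_j=1}$, $j=1,\dots,n$. With $h^x=\prod_jh_j^{x_j}$, its eigenfunctions are $u_\xi(x)=h^xe^{2\pi i\xi\cdot x}$, $\xi\in\mathbb Z^n$, with biorthogonal system $v_\xi(x)=h^{-x}e^{2\pi i\xi\cdot x}$. $C_{L_h}^\infty(\Omega)$ is the space of $f\in L^2(\Omega)$ with $\Delta^kf\in L^2(\Omega)$ satisfying the boundary conditions for all $k$; the $L_h$-Fourier transform is $\widehat f(\xi)=\int_\Omega f\overline{v_\xi}\,dx$. A continuous linear operator $A:C_{L_h}^\infty(\Omega)\to C_{L_h}^\infty(\Omega)$ is an $L_h$-Fourier multiplier if there is $\sigma:\mathbb Z^n\to\mathbb C$ with $\widehat{Af}(\xi)=\sigma(\xi)\widehat f(\xi)$ for all $f\in C_{L_h}^\infty(\Omega)$ and $\xi\in\mathbb Z^n$; equivalently its $L_h$-symbol $\sigma_A(x,\xi)=u_\xi(x)^{-1}(Au_\xi)(x)$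 does not depend on $x$. *)

theory Defs
  imports "HOL-Analysis.Analysis"
begin

text \<open>Setting: \<Omega> = (0,1)^n is modelled as box 0 1 in real^'n (its closure cbox 0 1);
  functions on \<Omega> are modelled as functions real^'n \<Rightarrow> complex vanishing outside cbox 0 1.\<close>

definition pd :: "'n::finite \<Rightarrow> (real^'n \<Rightarrow> complex) \<Rightarrow> real^'n \<Rightarrow> complex" where
  "pd j f x = (if x \<in> cbox 0 1 then
      vector_derivative (\<lambda>t. f (x + t *\<^sub>R axis j 1)) (at 0 within {t. x + t *\<^sub>R axis j 1 \<in> cbox 0 1})
    else 0)"

definition pds :: "'n::finite list \<Rightarrow> (real^'n \<Rightarrow> complex) \<Rightarrow> real^'n \<Rightarrow> complex" where
  "pds js f = foldr pd js f"

definition coord_list :: "'n::finite list" where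
  "coord_list = (SOME xs. distinct xs \<and> set xs = UNIV)"

definition dpow :: "('n::finite \<Rightarrow> nat) \<Rightarrow> (real^'n \<Rightarrow> complex) \<Rightarrow> real^'n \<Rightarrow> complex" where
  "dpow \<alpha> f = foldr (\<lambda>j g. (pd j ^^ \<alpha> j) g) coord_list f"

definition lap :: "(real^'n::finite \<Rightarrow> complex) \<Rightarrow> real^'n \<Rightarrow> complex" where
  "lap f = (\<lambda>x. \<Sum>j\<in>UNIV. pd j (pd j f) x)"

definition smooth_cube :: "(real^'n::finite \<Rightarrow> complex) \<Rightarrow> bool" where
  "smooth_cube f \<longleftrightarrow> (\<forall>js. continuous_on (cbox 0 1) (pds js f) \<and>
     (\<forall>j. \<forall>x\<in>cbox 0 1.
        ((\<lambda>t. pds js f (x + t *\<^sub>R axis j 1)) has_vector_derivative pd j (pds js f) x)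
          (at 0 within {t. x + t *\<^sub>R axis j 1 \<in> cbox 0 1})))"

definition Lh_bc :: "real^'n::finite \<Rightarrow> (real^'n \<Rightarrow> complex) \<Rightarrow> bool" where
  "Lh_bc h g \<longleftrightarrow> (\<forall>j. \<forall>x\<in>cbox 0 1. x $ j = 0 \<longrightarrow>
      complex_of_real (h $ j) * g x = g (x + axis j 1) \<and>
      complex_of_real (h $ j) * pd j g x = pd j g (x + axis j 1))"

definition CLh :: "real^'n::finite \<Rightarrow> (real^'n \<Rightarrow> complex) set" where
  "CLh h = {f. (\<forall>x. x \<notin> cbox 0 1 \<longrightarrow> f x = 0) \<and> smooth_cube f \<and>
              (\<forall>k. Lh_bc h ((lap ^^ k) f))}"

definition hpow :: "real^'n::finite \<Rightarrow> real^'n \<Rightarrow> real" where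
  "hpow h x = (\<Prod>j\<in>UNIV. (h $ j) powr (x $ j))"

definition u_Lh :: "real^'n::finite \<Rightarrow> int^'n \<Rightarrow> real^'n \<Rightarrow> complex" where
  "u_Lh h \<xi> x = complex_of_real (hpow h x) * cis (2 * pi * (\<Sum>j\<in>UNIV. of_int (\<xi> $ j) * x $ j))"

definition v_Lh :: "real^'n::finite \<Rightarrow> int^'n \<Rightarrow> real^'n \<Rightarrow> complex" where
  "v_Lh h \<xi> x = complex_of_real (hpow h (- x)) * cis (2 * pi * (\<Sum>j\<in>UNIV. of_int (\<xi> $ j) * x $ j))"

definition FT_Lh :: "real^'n::finite \<Rightarrow> (real^'n \<Rightarrow> complex) \<Rightarrow> int^'n \<Rightarrow> complex" where
  "FT_Lh h f \<xi> = integral (box 0 1) (\<lambda>x. f x * cnj (v_Lh h \<xi> x))"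

text \<open>Seminorms defining the Frechet topology of C^\<infinity>_{L_h}(\<Omega>):
  sup over the closed cube of all partial derivatives of order \<le> k.\<close>
definition seminorm_k :: "nat \<Rightarrow> (real^'n::finite \<Rightarrow> complex) \<Rightarrow> real" where
  "seminorm_k k f = Sup {norm (pds js f x) | js x. length js \<le> k \<and> x \<in> cbox 0 1}"

definition Lh_multiplier :: "real^'n::finite \<Rightarrow> ((real^'n \<Rightarrow> complex) \<Rightarrow> (real^'n \<Rightarrow> complex)) \<Rightarrow> bool" where
  "Lh_multiplier h A \<longleftrightarrow>
     (\<forall>f\<in>CLh h. A f \<in> CLh h) \<and>
     (\<forall>f\<in>CLh h. \<forall>g\<in>CLh h. A (\<lambda>x. f x + g x) = (\<lambda>x. A f x + A g x)) \<and>
     (\<forall>f\<in>CLh h. \<forall>c. A (\<lambda>x. c * f x) = (\<lambda>x. c * A f x)) \<and>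
     (\<forall>k. \<exists>k' C. \<forall>f\<in>CLh h. seminorm_k k (A f) \<le> C * seminorm_k k' f) \<and>
     (\<exists>\<sigma>::int^'n \<Rightarrow> complex. \<forall>f\<in>CLh h. \<forall>\<xi>. FT_Lh h (A f) \<xi> = \<sigma> \<xi> * FT_Lh h f \<xi>)"

definition PDO :: "nat \<Rightarrow> (('n::finite \<Rightarrow> nat) \<Rightarrow> complex) \<Rightarrow> (real^'n \<Rightarrow> complex) \<Rightarrow> real^'n \<Rightarrow> complex" where
  "PDO m a f = (\<lambda>x. \<Sum>\<alpha>\<in>{\<alpha>. (\<Sum>j\<in>UNIV. \<alpha> j) \<le> m}. a \<alpha> * dpow \<alpha> f x)"

end

theory Submission
  imports Defs
begin

text \<open>
  Each \<open>\<partial>\<^sub>j\<close> is an \<open>L\<^sub>h\<close>-Fourier multiplier with symbol \<open>\<mu>\<^sub>j = ln h\<^sub>j + 2\<pi>i\<xi>\<^sub>j\<close>: the kernel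
  \<open>cnj v\<^sub>\<xi>\<close> of the transform is \<open>exp (- \<Sum>\<^sub>j \<mu>\<^sub>j x\<^sub>j)\<close>, so integration by parts in \<open>x\<^sub>j\<close> turns
  \<open>\<partial>\<^sub>j\<close> into multiplication by \<open>\<mu>\<^sub>j\<close>. The boundary terms cancel: from the face \<open>x\<^sub>j = 0\<close> to the
  face \<open>x\<^sub>j = 1\<close> the function gets multiplied by \<open>h\<^sub>j\<close> and the kernel by \<open>1/h\<^sub>j\<close>. Hence \<open>P(D)\<close>
  has the symbol \<open>\<Sum>\<^sub>\<alpha> a\<^sub>\<alpha> \<mu>\<^sup>\<alpha>\<close>.

  That \<open>P(D)\<close> maps \<open>C\<^sup>\<infinity>\<^sub>L\<^sub>h\<close> to itself follows from a description of \<open>C\<^sup>\<infinity>\<^sub>L\<^sub>h\<close> as the smooth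
  functions all of whose derivatives satisfy the first boundary condition, a class that is
  closed under derivatives and linear combinations. Tangential derivatives preserve
  the boundary condition directly, normal ones by \<open>\<partial>\<^sub>j\<^sup>2 = \<Delta> - \<Sum>\<^sub>i\<^sub>\<noteq>\<^sub>j \<partial>\<^sub>i\<^sup>2\<close> and the symmetry of
  second derivatives. Continuity is the bound of the \<open>k\<close>-th seminorm of \<open>P(D) f\<close> by the
  \<open>(k + m)\<close>-th seminorm of \<open>f\<close>.
\<close>

section \<open>Partial derivatives on the closed cube\<close>

lemma cube_axis_line:
  fixes x :: "real^'n::finite"
  assumes "x \<in> cbox 0 1"
  shows "{t. x + t *\<^sub>R axis j 1 \<in> cbox 0 1} = {-(x$j)..1 - x$j}"
  using assms by (auto simp: mem_box_cart axis_def)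

lemma add_axis_in_cube:
  fixes x :: "real^'n::finite"
  assumes "x \<in> cbox 0 1" "0 \<le> x$j + t" "x$j + t \<le> 1"
  shows "x + t *\<^sub>R axis j 1 \<in> cbox 0 1"
proof -
  have "0 \<le> x$i" "x$i \<le> 1" for i
    using assms(1) by (simp_all add: mem_box_cart)
  then show ?thesis
    using assms(2,3) by (auto simp: mem_box_cart axis_def)
qed

lemma pd_eqI:
  fixes g :: "real^'n::finite \<Rightarrow> complex"
  assumes x: "x \<in> cbox 0 1"
    and D: "((\<lambda>t. g (x + t *\<^sub>R axis j 1)) has_vector_derivative D) (at 0 within {-(x$j)..1 - x$j})"
  shows "pd j g x = D"
proof -
  have "0 \<le> x$j" "x$j \<le> 1"
    using x by (simp_all add: mem_box_cart)
  then show ?thesis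
    unfolding pd_def using x D cube_axis_line[OF x]
    by (auto intro!: vector_derivative_within_closed_interval)
qed

lemma pd_outside_cube: "x \<notin> cbox 0 1 \<Longrightarrow> pd j g x = 0"
  by (simp add: pd_def)

definition partially_differentiable :: "(real^'n::finite \<Rightarrow> complex) \<Rightarrow> bool" where
  "partially_differentiable g \<longleftrightarrow> (\<forall>j. \<forall>x\<in>cbox 0 1.
     ((\<lambda>t. g (x + t *\<^sub>R axis j 1)) has_vector_derivative pd j g x) (at 0 within {-(x$j)..1 - x$j}))"

lemma partially_differentiableD:
  "partially_differentiable g \<Longrightarrow> x \<in> cbox 0 1 \<Longrightarrow>
    ((\<lambda>t. g (x + t *\<^sub>R axis j 1)) has_vector_derivative pd j g x) (at 0 within {-(x$j)..1 - x$j})"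
  by (simp add: partially_differentiable_def)

lemma pd_add:
  assumes "partially_differentiable f" "partially_differentiable g"
  shows "pd j (\<lambda>x. f x + g x) = (\<lambda>x. pd j f x + pd j g x)"
proof
  fix x
  show "pd j (\<lambda>x. f x + g x) x = pd j f x + pd j g x"
  proof (cases "x \<in> cbox 0 1")
    case True
    show ?thesis
      by (rule pd_eqI[OF True]) (intro has_vector_derivative_add partially_differentiableD assms True)
  qed (simp add: pd_outside_cube)
qed

lemma pd_cmult:
  assumes "partially_differentiable g"
  shows "pd j (\<lambda>x. c * g x) = (\<lambda>x. c * pd j g x)"
proof
  fix x
  show "pd j (\<lambda>x. c * g x) x = c * pd j g x"
  proof (cases "x \<in> cbox 0 1")
    case True
    show ?thesis
      by (rule pd_eqI[OF True]) (intro has_vector_derivative_mult_right partially_differentiableD assms True)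
  qed (simp add: pd_outside_cube)
qed

lemma pd_mult:
  assumes "partially_differentiable f" "partially_differentiable g"
  shows "pd j (\<lambda>x. f x * g x) = (\<lambda>x. f x * pd j g x + pd j f x * g x)"
proof
  fix x
  show "pd j (\<lambda>x. f x * g x) x = f x * pd j g x + pd j f x * g x"
  proof (cases "x \<in> cbox 0 1")
    case True
    show ?thesis
      using has_vector_derivative_mult[OF partially_differentiableD[OF assms(1) True, where j=j]
          partially_differentiableD[OF assms(2) True, where j=j]]
      by (intro pd_eqI[OF True]) simp
  qed (simp add: pd_outside_cube)
qed

lemma pd_const_0: "pd j (\<lambda>x. 0) = (\<lambda>x. 0)"
proof
  fix x
  show "pd j (\<lambda>x. 0) x = 0"
  proof (cases "x \<in> cbox 0 1")
    case True
    show ?thesis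
      by (rule pd_eqI[OF True]) (rule has_vector_derivative_const)
  qed (simp add: pd_outside_cube)
qed

lemma partially_differentiable_add:
  assumes "partially_differentiable f" "partially_differentiable g"
  shows "partially_differentiable (\<lambda>x. f x + g x)"
  unfolding partially_differentiable_def pd_add[OF assms]
  by (auto intro!: has_vector_derivative_add partially_differentiableD assms)

lemma partially_differentiable_cmult:
  assumes "partially_differentiable g"
  shows "partially_differentiable (\<lambda>x. c * g x)"
  unfolding partially_differentiable_def pd_cmult[OF assms]
  by (auto intro!: has_vector_derivative_mult_right partially_differentiableD assms)

lemma partially_differentiable_mult:
  fixes f g :: "real^'n::finite \<Rightarrow> complex"
  assumes "partially_differentiable f" "partially_differentiable g"
  shows "partially_differentiable (\<lambda>x. f x * g x)"
  unfolding partially_differentiable_def pd_mult[OF assms]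
proof (intro allI ballI)
  fix j and x :: "real^'n" assume x: "x \<in> cbox 0 1"
  show "((\<lambda>t. f (x + t *\<^sub>R axis j 1) * g (x + t *\<^sub>R axis j 1)) has_vector_derivative
      f x * pd j g x + pd j f x * g x) (at 0 within {-(x$j)..1 - x$j})"
    using has_vector_derivative_mult[OF partially_differentiableD[OF assms(1) x, where j=j]
        partially_differentiableD[OF assms(2) x, where j=j]]
    by simp
qed

lemma partially_differentiable_const_0: "partially_differentiable (\<lambda>x. 0)"
  by (simp add: partially_differentiable_def pd_const_0)

lemma has_vector_derivative_pd_axis_line:
  fixes g :: "real^'n::finite \<Rightarrow> complex"
  assumes "partially_differentiable g" "y \<in> cbox 0 1" "r \<in> {-(y$i)..1 - y$i}"
  shows "((\<lambda>t. g (y + t *\<^sub>R axis i 1)) has_vector_derivative pd i g (y + r *\<^sub>R axis i 1))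
           (at r within {-(y$i)..1 - y$i})"
proof -
  let ?z = "y + r *\<^sub>R axis i 1"
  have z: "?z \<in> cbox 0 1"
    using assms(2,3) by (auto simp: mem_box_cart axis_def)
  have zi: "?z $ i = y$i + r"
    by (simp add: axis_def)
  have shift: "((\<lambda>t. t - r) has_vector_derivative 1) (at r within {-(y$i)..1 - y$i})"
    by (auto intro!: derivative_eq_intros)
  have im: "(\<lambda>t. t - r) ` {-(y$i)..1 - y$i} = {-(?z$i)..1 - ?z$i}"
    unfolding zi by (auto simp: image_iff intro!: bexI[where x="_ + r"])
  have "((\<lambda>t. g (?z + t *\<^sub>R axis i 1)) has_vector_derivative pd i g ?z)
      (at ((\<lambda>t. t - r) r) within (\<lambda>t. t - r) ` {-(y$i)..1 - y$i})"
    unfolding im using partially_differentiableD[OF assms(1) z, of i] by simp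
  from vector_diff_chain_within[OF shift this]
  have "(((\<lambda>t. g (?z + t *\<^sub>R axis i 1)) \<circ> (\<lambda>t. t - r)) has_vector_derivative pd i g ?z)
      (at r within {-(y$i)..1 - y$i})"
    by simp
  moreover have "(\<lambda>t. g (?z + t *\<^sub>R axis i 1)) \<circ> (\<lambda>t. t - r) = (\<lambda>t. g (y + t *\<^sub>R axis i 1))"
    by (rule ext) (simp add: algebra_simps)
  ultimately show ?thesis
    by simp
qed

lemma axis_segment_subset:
  fixes y :: "real^'n::finite"
  assumes "y \<in> cbox 0 1" "y + t *\<^sub>R axis j 1 \<in> cbox 0 1"
  shows "closed_segment 0 t \<subseteq> {-(y$j)..1 - y$j}"
  using assms cube_axis_line[OF assms(1), of j]
  by (intro closed_segment_subset) (auto simp: mem_box_cart)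

lemma has_vector_derivative_pd_axis_segment:
  fixes g :: "real^'n::finite \<Rightarrow> complex"
  assumes "partially_differentiable g" "y \<in> cbox 0 1" "y + t *\<^sub>R axis j 1 \<in> cbox 0 1"
    and u: "u \<in> closed_segment 0 t"
  shows "((\<lambda>s. g (y + s *\<^sub>R axis j 1)) has_vector_derivative pd j g (y + u *\<^sub>R axis j 1))
           (at u within closed_segment 0 t)"
  using has_vector_derivative_pd_axis_line[OF assms(1,2)] axis_segment_subset[OF assms(2,3)] u
  by (blast intro: has_vector_derivative_within_subset)

lemma norm_increment_le:
  fixes \<phi> :: "real \<Rightarrow> 'a::real_normed_vector"
  assumes D: "\<And>u. u \<in> closed_segment 0 t \<Longrightarrow> (\<phi> has_vector_derivative \<phi>' u) (at u within closed_segment 0 t)"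
    and B: "\<And>u. u \<in> closed_segment 0 t \<Longrightarrow> norm (\<phi>' u - K) \<le> B"
  shows "norm (\<phi> t - \<phi> 0 - t *\<^sub>R K) \<le> B * \<bar>t\<bar>"
proof -
  have "norm ((\<phi> t - t *\<^sub>R K) - (\<phi> 0 - 0 *\<^sub>R K)) \<le> B * norm (t - 0)"
  proof (rule differentiable_bound[where f'="\<lambda>u h. h *\<^sub>R (\<phi>' u - K)"])
    show "((\<lambda>u. \<phi> u - u *\<^sub>R K) has_derivative (\<lambda>h. h *\<^sub>R (\<phi>' u - K))) (at u within closed_segment 0 t)"
      if "u \<in> closed_segment 0 t" for u
      using D[OF that] unfolding has_vector_derivative_def
      by (auto intro!: derivative_eq_intros simp: algebra_simps)
    show "onorm (\<lambda>h. h *\<^sub>R (\<phi>' u - K)) \<le> B" if "u \<in> closed_segment 0 t" for u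
      using B[OF that] by (simp add: onorm_scaleR_left[OF bounded_linear_ident] onorm_id)
  qed auto
  then show ?thesis
    by (simp add: algebra_simps)
qed

lemma norm_increment_along_axis_le:
  fixes g :: "real^'n::finite \<Rightarrow> complex"
  assumes "partially_differentiable g" "y \<in> cbox 0 1" "y + t *\<^sub>R axis j 1 \<in> cbox 0 1"
    and B: "\<And>u. u \<in> closed_segment 0 t \<Longrightarrow> y + u *\<^sub>R axis j 1 \<in> cbox 0 1 \<Longrightarrow>
              norm (pd j g (y + u *\<^sub>R axis j 1) - K) \<le> B"
  shows "norm (g (y + t *\<^sub>R axis j 1) - g y - t *\<^sub>R K) \<le> B * \<bar>t\<bar>"
proof -
  have "u \<in> {t. y + t *\<^sub>R axis j 1 \<in> cbox 0 1}" if "u \<in> closed_segment 0 t" for u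
    unfolding cube_axis_line[OF assms(2)] using axis_segment_subset[OF assms(2,3)] that by blast
  then show ?thesis
    using norm_increment_le[OF has_vector_derivative_pd_axis_segment[OF assms(1-3)] B] by simp
qed

lemma pds_Nil [simp]: "pds [] f = f"
  by (simp add: pds_def)

lemma pds_Cons [simp]: "pds (j # js) f = pd j (pds js f)"
  by (simp add: pds_def)

lemma pds_append: "pds (js @ ks) f = pds js (pds ks f)"
  by (simp add: pds_def)

lemma pds_outside_cube:
  assumes "\<forall>x. x \<notin> cbox 0 1 \<longrightarrow> f x = 0" "x \<notin> cbox 0 1"
  shows "pds js f x = 0"
  using assms by (cases js) (auto simp: pd_outside_cube)

lemma smooth_cube_iff:
  "smooth_cube f \<longleftrightarrow>
     (\<forall>js. continuous_on (cbox 0 1) (pds js f) \<and> partially_differentiable (pds js f))"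
  by (simp add: smooth_cube_def partially_differentiable_def cube_axis_line)

lemma smooth_cube_pds: "smooth_cube f \<Longrightarrow> smooth_cube (pds js f)"
  by (simp add: smooth_cube_iff flip: pds_append)

lemma smooth_cube_pd: "smooth_cube f \<Longrightarrow> smooth_cube (pd j f)"
  using smooth_cube_pds[of f "[j]"] by simp

lemma smooth_cube_continuous_on: "smooth_cube f \<Longrightarrow> continuous_on (cbox 0 1) f"
  using smooth_cube_iff[of f] pds_Nil by metis

lemma smooth_cube_partially_differentiable: "smooth_cube f \<Longrightarrow> partially_differentiable f"
  using smooth_cube_iff[of f] pds_Nil by metis

lemma pds_add:
  assumes "smooth_cube f" "smooth_cube g"
  shows "pds js (\<lambda>x. f x + g x) = (\<lambda>x. pds js f x + pds js g x)"
proof (induction js)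
  case (Cons j js)
  then show ?case
    using assms by (simp add: pd_add smooth_cube_partially_differentiable smooth_cube_pds)
qed simp

lemma pds_cmult:
  assumes "smooth_cube g"
  shows "pds js (\<lambda>x. c * g x) = (\<lambda>x. c * pds js g x)"
proof (induction js)
  case (Cons j js)
  then show ?case
    using assms by (simp add: pd_cmult smooth_cube_partially_differentiable smooth_cube_pds)
qed simp

lemma pds_const_0: "pds js (\<lambda>x. 0) = (\<lambda>x. 0)"
  by (induction js) (simp_all add: pd_const_0)

lemma smooth_cube_add:
  assumes "smooth_cube f" "smooth_cube g"
  shows "smooth_cube (\<lambda>x. f x + g x)"
  using assms unfolding smooth_cube_iff pds_add[OF assms]
  by (auto intro: continuous_on_add partially_differentiable_add)

lemma smooth_cube_cmult:
  assumes "smooth_cube g"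
  shows "smooth_cube (\<lambda>x. c * g x)"
  using assms unfolding smooth_cube_iff pds_cmult[OF assms]
  by (auto intro: continuous_on_mult_left partially_differentiable_cmult)

lemma smooth_cube_const_0: "smooth_cube (\<lambda>x. 0)"
  by (simp add: smooth_cube_iff pds_const_0 partially_differentiable_const_0)

lemma smooth_cube_sum:
  assumes "finite A" "\<And>a. a \<in> A \<Longrightarrow> smooth_cube (F a)"
  shows "smooth_cube (\<lambda>x. \<Sum>a\<in>A. F a x)"
  using assms by (induction A rule: finite_induct) (auto intro: smooth_cube_add smooth_cube_const_0)

lemma pds_sum:
  assumes "finite A" "\<And>a. a \<in> A \<Longrightarrow> smooth_cube (F a)"
  shows "pds js (\<lambda>x. \<Sum>a\<in>A. F a x) = (\<lambda>x. \<Sum>a\<in>A. pds js (F a) x)"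
  using assms
proof (induction A rule: finite_induct)
  case (insert a A)
  then show ?case
    by (simp add: pds_add smooth_cube_sum)
qed (simp add: pds_const_0)

lemma smooth_cube_lap: "smooth_cube f \<Longrightarrow> smooth_cube (lap f)"
  unfolding lap_def by (intro smooth_cube_sum) (auto intro: smooth_cube_pd)

section \<open>Symmetry of second derivatives\<close>

lemma second_difference_estimate:
  fixes g :: "real^'n::finite \<Rightarrow> complex"
  assumes Dg: "partially_differentiable g" and Dig: "partially_differentiable (pd i g)"
    and R: "\<And>u t. u \<in> closed_segment 0 p \<Longrightarrow> t \<in> closed_segment 0 q \<Longrightarrow>
              x + u *\<^sub>R axis i 1 + t *\<^sub>R axis j 1 \<in> cbox 0 1"
    and B: "\<And>u t. u \<in> closed_segment 0 p \<Longrightarrow> t \<in> closed_segment 0 q \<Longrightarrow>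
              norm (pd j (pd i g) (x + u *\<^sub>R axis i 1 + t *\<^sub>R axis j 1) - K) \<le> \<epsilon>"
  shows "norm (g (x + p *\<^sub>R axis i 1 + q *\<^sub>R axis j 1) - g (x + p *\<^sub>R axis i 1)
               - g (x + q *\<^sub>R axis j 1) + g x - (p * q) *\<^sub>R K) \<le> \<epsilon> * \<bar>q\<bar> * \<bar>p\<bar>"
proof -
  have x: "x \<in> cbox 0 1" and xq: "x + q *\<^sub>R axis j 1 \<in> cbox 0 1"
    using R[of 0 0] R[of 0 q] by simp_all
  have inner: "norm (pd i g (x + u *\<^sub>R axis i 1 + q *\<^sub>R axis j 1) - pd i g (x + u *\<^sub>R axis i 1)
      - q *\<^sub>R K) \<le> \<epsilon> * \<bar>q\<bar>" if u: "u \<in> closed_segment 0 p" for u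
    using R[OF u, of 0] R[OF u, of q] B[OF u]
    by (intro norm_increment_along_axis_le[OF Dig]) auto
  let ?\<phi> = "\<lambda>u. g (x + q *\<^sub>R axis j 1 + u *\<^sub>R axis i 1) - g (x + u *\<^sub>R axis i 1)"
  have "norm (?\<phi> p - ?\<phi> 0 - p *\<^sub>R (q *\<^sub>R K)) \<le> (\<epsilon> * \<bar>q\<bar>) * \<bar>p\<bar>"
  proof (rule norm_increment_le)
    fix u assume u: "u \<in> closed_segment 0 p"
    have xp: "x + p *\<^sub>R axis i 1 \<in> cbox 0 1" and xqp: "x + q *\<^sub>R axis j 1 + p *\<^sub>R axis i 1 \<in> cbox 0 1"
      using R[of p 0] R[of p q] by (simp_all add: algebra_simps)
    show "(?\<phi> has_vector_derivative pd i g (x + q *\<^sub>R axis j 1 + u *\<^sub>R axis i 1) - pd i g (x + u *\<^sub>R axis i 1))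
        (at u within closed_segment 0 p)"
      by (intro has_vector_derivative_diff has_vector_derivative_pd_axis_segment Dg x xq xp xqp u)
    show "norm (pd i g (x + q *\<^sub>R axis j 1 + u *\<^sub>R axis i 1) - pd i g (x + u *\<^sub>R axis i 1) - q *\<^sub>R K)
        \<le> \<epsilon> * \<bar>q\<bar>"
      using inner[OF u] by (simp add: algebra_simps)
  qed
  then show ?thesis
    by (simp add: algebra_simps)
qed

text \<open>A square of side \<open>r \<le> 1/2\<close> with a corner at \<open>x\<close>, pointing into the cube.\<close>

lemma axis_square_in_cube:
  fixes x :: "real^'n::finite"
  assumes x: "x \<in> cbox 0 1" and ij: "i \<noteq> j" and r: "0 \<le> r" "r \<le> 1/2"
    and u: "u \<in> closed_segment 0 (if x$i \<le> 1/2 then r else -r)"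
    and t: "t \<in> closed_segment 0 (if x$j \<le> 1/2 then r else -r)"
  shows "x + u *\<^sub>R axis i 1 + t *\<^sub>R axis j 1 \<in> cbox 0 1"
    and "dist (x + u *\<^sub>R axis i 1 + t *\<^sub>R axis j 1) x \<le> 2 * r"
proof -
  have seg: "\<bar>v\<bar> \<le> r \<and> 0 \<le> c + v \<and> c + v \<le> 1"
    if "v \<in> closed_segment 0 (if c \<le> 1/2 then r else -r)" "0 \<le> c" "c \<le> 1" for v c
    using that r by (auto simp: closed_segment_eq_real_ivl split: if_splits)
  have "0 \<le> x$i" "x$i \<le> 1" "0 \<le> x$j" "x$j \<le> 1"
    using x by (simp_all add: mem_box_cart)
  then have u': "\<bar>u\<bar> \<le> r" "0 \<le> x$i + u" "x$i + u \<le> 1"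
    and t': "\<bar>t\<bar> \<le> r" "0 \<le> x$j + t" "x$j + t \<le> 1"
    using seg[OF u] seg[OF t] by auto
  have xu: "x + u *\<^sub>R axis i 1 \<in> cbox 0 1"
    using add_axis_in_cube[OF x u'(2,3)] .
  have xuj: "(x + u *\<^sub>R axis i 1) $ j = x$j"
    using ij by (simp add: axis_def)
  show "x + u *\<^sub>R axis i 1 + t *\<^sub>R axis j 1 \<in> cbox 0 1"
    by (rule add_axis_in_cube[OF xu]) (simp_all only: xuj t'(2,3))
  have "dist (x + u *\<^sub>R axis i 1 + t *\<^sub>R axis j 1) x \<le> \<bar>u\<bar> + \<bar>t\<bar>"
    using norm_triangle_ineq[of "u *\<^sub>R axis i (1::real) :: real^'n" "t *\<^sub>R axis j 1"]
    by (simp add: dist_norm)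
  then show "dist (x + u *\<^sub>R axis i 1 + t *\<^sub>R axis j 1) x \<le> 2 * r"
    using u'(1) t'(1) by simp
qed

lemma norm_pd_commutator_le:
  fixes g :: "real^'n::finite \<Rightarrow> complex"
  assumes Dg: "partially_differentiable g"
    and Dig: "partially_differentiable (pd i g)" and Djg: "partially_differentiable (pd j g)"
    and x: "x \<in> cbox 0 1" and ij: "i \<noteq> j" and r: "0 < r" "r \<le> 1/2"
    and close: "\<And>y. y \<in> cbox 0 1 \<Longrightarrow> dist y x \<le> 2 * r \<Longrightarrow>
      norm (pd j (pd i g) y - pd j (pd i g) x) \<le> \<epsilon> \<and> norm (pd i (pd j g) y - pd i (pd j g) x) \<le> \<epsilon>"
  shows "norm (pd j (pd i g) x - pd i (pd j g) x) \<le> 2 * \<epsilon>"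
proof -
  define p where "p = (if x$i \<le> 1/2 then r else -r)"
  define q where "q = (if x$j \<le> 1/2 then r else -r)"
  have pq: "\<bar>p\<bar> = r" "\<bar>q\<bar> = r"
    using r by (auto simp: p_def q_def)
  note square = axis_square_in_cube[OF x ij less_imp_le[OF r(1)] r(2), folded p_def q_def]
  let ?D = "g (x + p *\<^sub>R axis i 1 + q *\<^sub>R axis j 1) - g (x + p *\<^sub>R axis i 1)
    - g (x + q *\<^sub>R axis j 1) + g x"
  have "norm (?D - (p * q) *\<^sub>R pd j (pd i g) x) \<le> \<epsilon> * \<bar>q\<bar> * \<bar>p\<bar>"
    using square close by (intro second_difference_estimate[OF Dg Dig]) auto
  moreover have "norm (g (x + q *\<^sub>R axis j 1 + p *\<^sub>R axis i 1) - g (x + q *\<^sub>R axis j 1)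
      - g (x + p *\<^sub>R axis i 1) + g x - (q * p) *\<^sub>R pd i (pd j g) x) \<le> \<epsilon> * \<bar>p\<bar> * \<bar>q\<bar>"
  proof (rule second_difference_estimate[OF Dg Djg])
    fix t u assume tu: "t \<in> closed_segment 0 q" "u \<in> closed_segment 0 p"
    have swap: "x + t *\<^sub>R axis j 1 + u *\<^sub>R axis i 1 = x + u *\<^sub>R axis i 1 + t *\<^sub>R axis j 1"
      by (simp add: algebra_simps)
    show "x + t *\<^sub>R axis j 1 + u *\<^sub>R axis i 1 \<in> cbox 0 1"
      "norm (pd i (pd j g) (x + t *\<^sub>R axis j 1 + u *\<^sub>R axis i 1) - pd i (pd j g) x) \<le> \<epsilon>"
      unfolding swap using square[OF tu(2,1)] close by auto
  qed
  then have "norm (?D - (p * q) *\<^sub>R pd i (pd j g) x) \<le> \<epsilon> * \<bar>q\<bar> * \<bar>p\<bar>"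
    by (simp add: algebra_simps)
  ultimately have "norm ((p * q) *\<^sub>R (pd j (pd i g) x - pd i (pd j g) x)) \<le> (r * r) * (2 * \<epsilon>)"
    using norm_triangle_ineq4[of "?D - (p * q) *\<^sub>R pd i (pd j g) x" "?D - (p * q) *\<^sub>R pd j (pd i g) x"]
    by (simp add: pq algebra_simps)
  then have "(r * r) * norm (pd j (pd i g) x - pd i (pd j g) x) \<le> (r * r) * (2 * \<epsilon>)"
    by (simp add: abs_mult pq)
  then show ?thesis
    using r by (simp add: mult_le_cancel_left_pos)
qed

lemma pd_commute_at:
  fixes g :: "real^'n::finite \<Rightarrow> complex"
  assumes Dg: "partially_differentiable g"
    and Dig: "partially_differentiable (pd i g)" and Djg: "partially_differentiable (pd j g)"
    and cij: "continuous_on (cbox 0 1) (pd j (pd i g))"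
    and cji: "continuous_on (cbox 0 1) (pd i (pd j g))"
    and x: "x \<in> cbox 0 1"
  shows "pd j (pd i g) x = pd i (pd j g) x"
proof (cases "i = j")
  case ij: False
  have small: "norm (pd j (pd i g) x - pd i (pd j g) x) \<le> 2 * \<epsilon>" if \<epsilon>: "\<epsilon> > 0" for \<epsilon>
  proof -
    obtain d1 where d1: "d1 > 0" "\<And>y. y \<in> cbox 0 1 \<Longrightarrow> dist y x < d1 \<Longrightarrow>
        dist (pd j (pd i g) y) (pd j (pd i g) x) < \<epsilon>"
      using cij x \<epsilon> unfolding continuous_on_iff by blast
    obtain d2 where d2: "d2 > 0" "\<And>y. y \<in> cbox 0 1 \<Longrightarrow> dist y x < d2 \<Longrightarrow>
        dist (pd i (pd j g) y) (pd i (pd j g) x) < \<epsilon>"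
      using cji x \<epsilon> unfolding continuous_on_iff by blast
    define r where "r = min (1/2) (min d1 d2 / 3)"
    have r: "0 < r" "r \<le> 1/2" "2 * r < d1" "2 * r < d2"
      using d1 d2 by (auto simp: r_def)
    show ?thesis
    proof (rule norm_pd_commutator_le[OF Dg Dig Djg x ij r(1,2)])
      fix y assume "y \<in> cbox 0 1" "dist y x \<le> 2 * r"
      with r d1(2) d2(2) show "norm (pd j (pd i g) y - pd j (pd i g) x) \<le> \<epsilon> \<and>
          norm (pd i (pd j g) y - pd i (pd j g) x) \<le> \<epsilon>"
        by (auto simp: dist_norm intro: less_imp_le)
    qed
  qed
  have "norm (pd j (pd i g) x - pd i (pd j g) x) \<le> 0"
  proof (rule field_le_epsilon)
    fix e :: real assume "0 < e"
    then show "norm (pd j (pd i g) x - pd i (pd j g) x) \<le> 0 + e"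
      using small[of "e / 2"] by simp
  qed
  then show ?thesis
    by simp
qed simp

lemma pd_commute:
  assumes "smooth_cube g"
  shows "pd j (pd i g) = pd i (pd j g)"
proof
  fix x
  show "pd j (pd i g) x = pd i (pd j g) x"
  proof (cases "x \<in> cbox 0 1")
    case True
    with assms show ?thesis
      by (intro pd_commute_at)
        (auto intro: smooth_cube_partially_differentiable smooth_cube_continuous_on smooth_cube_pd)
  qed (simp add: pd_outside_cube)
qed

lemma pd_pds_commute:
  assumes "smooth_cube g"
  shows "pd i (pds js g) = pds js (pd i g)"
proof (induction js)
  case (Cons j js)
  have "pd i (pds (j # js) g) = pd j (pd i (pds js g))"
    using pd_commute[OF smooth_cube_pds[OF assms]] by simp
  with Cons show ?case
    by simp
qed simp

lemma pds_mset_eq: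
  assumes "smooth_cube g"
  shows "mset js = mset ks \<Longrightarrow> pds js g = pds ks g"
proof (induction js arbitrary: ks)
  case (Cons i js)
  then have "i \<in> set ks"
    by (metis list.set_intros(1) set_mset_mset)
  then obtain ks1 ks2 where ks: "ks = ks1 @ i # ks2"
    by (meson split_list)
  then have "mset js = mset (ks1 @ ks2)"
    using Cons.prems by simp
  then have "pds (i # js) g = pd i (pds ks1 (pds ks2 g))"
    using Cons.IH[of "ks1 @ ks2"] by (simp add: pds_append)
  also have "\<dots> = pds ks1 (pd i (pds ks2 g))"
    by (rule pd_pds_commute[OF smooth_cube_pds[OF assms]])
  finally show ?case
    by (simp add: ks pds_append)
qed simp

section \<open>The boundary conditions\<close>

definition twisted_periodic :: "real^'n::finite \<Rightarrow> 'n \<Rightarrow> (real^'n \<Rightarrow> complex) \<Rightarrow> bool" where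
  "twisted_periodic h j g \<longleftrightarrow>
     (\<forall>x\<in>cbox 0 1. x$j = 0 \<longrightarrow> complex_of_real (h$j) * g x = g (x + axis j 1))"

lemma Lh_bc_iff: "Lh_bc h g \<longleftrightarrow> (\<forall>j. twisted_periodic h j g \<and> twisted_periodic h j (pd j g))"
  by (auto simp: Lh_bc_def twisted_periodic_def)

lemma twisted_periodic_add:
  "twisted_periodic h j f \<Longrightarrow> twisted_periodic h j g \<Longrightarrow> twisted_periodic h j (\<lambda>x. f x + g x)"
  by (simp add: twisted_periodic_def distrib_left)

lemma twisted_periodic_diff:
  "twisted_periodic h j f \<Longrightarrow> twisted_periodic h j g \<Longrightarrow> twisted_periodic h j (\<lambda>x. f x - g x)"
  by (simp add: twisted_periodic_def right_diff_distrib)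

lemma twisted_periodic_cmult: "twisted_periodic h j g \<Longrightarrow> twisted_periodic h j (\<lambda>x. c * g x)"
  by (simp add: twisted_periodic_def algebra_simps)

lemma twisted_periodic_const_0: "twisted_periodic h j (\<lambda>x. 0)"
  by (simp add: twisted_periodic_def)

lemma twisted_periodic_sum:
  assumes "finite A" "\<And>a. a \<in> A \<Longrightarrow> twisted_periodic h j (F a)"
  shows "twisted_periodic h j (\<lambda>x. \<Sum>a\<in>A. F a x)"
  using assms
  by (induction A rule: finite_induct) (auto intro: twisted_periodic_add twisted_periodic_const_0)

lemma twisted_periodic_pd_tangential:
  fixes g :: "real^'n::finite \<Rightarrow> complex"
  assumes ij: "i \<noteq> j" and per: "twisted_periodic h j g" and D: "partially_differentiable g"
  shows "twisted_periodic h j (pd i g)"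
  unfolding twisted_periodic_def
proof (intro ballI impI)
  fix x :: "real^'n" assume x: "x \<in> cbox 0 1" and xj: "x$j = 0"
  let ?y = "x + axis j 1"
  have y: "?y \<in> cbox 0 1"
    using add_axis_in_cube[OF x, of j 1] xj by simp
  have yi: "?y $ i = x $ i"
    using ij by (simp add: axis_def)
  have "0 \<le> x$i" "x$i \<le> 1"
    using x by (simp_all add: mem_box_cart)
  then have "0 \<in> {-(?y$i)..1 - ?y$i}"
    unfolding yi by simp
  moreover have "g (?y + t *\<^sub>R axis i 1) = complex_of_real (h$j) * g (x + t *\<^sub>R axis i 1)"
    if t: "t \<in> {-(?y$i)..1 - ?y$i}" for t
  proof -
    have "x + t *\<^sub>R axis i 1 \<in> cbox 0 1"
      using t unfolding yi by (intro add_axis_in_cube x) auto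
    moreover have "(x + t *\<^sub>R axis i 1) $ j = 0"
      using xj ij by (simp add: axis_def)
    ultimately have "complex_of_real (h$j) * g (x + t *\<^sub>R axis i 1) = g (x + t *\<^sub>R axis i 1 + axis j 1)"
      using per unfolding twisted_periodic_def by blast
    moreover have "?y + t *\<^sub>R axis i 1 = x + t *\<^sub>R axis i 1 + axis j 1"
      by (simp add: algebra_simps)
    ultimately show ?thesis
      by metis
  qed
  moreover have "((\<lambda>t. complex_of_real (h$j) * g (x + t *\<^sub>R axis i 1)) has_vector_derivative
      complex_of_real (h$j) * pd i g x) (at 0 within {-(?y$i)..1 - ?y$i})"
    unfolding yi by (intro has_vector_derivative_mult_right partially_differentiableD[OF D x])
  ultimately have "((\<lambda>t. g (?y + t *\<^sub>R axis i 1)) has_vector_derivative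
      complex_of_real (h$j) * pd i g x) (at 0 within {-(?y$i)..1 - ?y$i})"
    by (rule has_vector_derivative_transform)
  then show "complex_of_real (h$j) * pd i g x = pd i g ?y"
    by (intro pd_eqI[OF y, symmetric])
qed

lemma twisted_periodic_pds_tangential:
  assumes "smooth_cube g" "twisted_periodic h j g" "j \<notin> set js"
  shows "twisted_periodic h j (pds js g)"
  using assms
  by (induction js)
    (auto intro!: twisted_periodic_pd_tangential smooth_cube_partially_differentiable smooth_cube_pds)

lemma CLhD:
  assumes "f \<in> CLh h"
  shows "\<forall>x. x \<notin> cbox 0 1 \<longrightarrow> f x = 0" "smooth_cube f" "Lh_bc h ((lap ^^ k) f)"
  using assms by (auto simp: CLh_def)

lemma CLh_lap:
  assumes f: "f \<in> CLh h"
  shows "lap f \<in> CLh h"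
proof -
  have "\<forall>x. x \<notin> cbox 0 1 \<longrightarrow> lap f x = 0"
    by (simp add: lap_def pd_outside_cube)
  moreover have "Lh_bc h ((lap ^^ k) (lap f))" for k
    using CLhD(3)[OF f, of "Suc k"] by (simp add: funpow_Suc_right del: funpow.simps)
  ultimately show ?thesis
    using smooth_cube_lap[OF CLhD(2)[OF f]] by (simp add: CLh_def)
qed

text \<open>
  In the induction step, \<open>\<partial>\<^sub>j\<^sup>k\<^sup>+\<^sup>2 f = \<partial>\<^sub>j\<^sup>k (\<Delta>f) - \<Sum>\<^sub>i\<^sub>\<noteq>\<^sub>j \<partial>\<^sub>i\<^sup>2 \<partial>\<^sub>j\<^sup>k f\<close>, where the first term is
  handled by the induction hypothesis for \<open>\<Delta>f \<in> C\<^sup>\<infinity>\<^sub>L\<^sub>h\<close> and the others are tangential.\<close>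

lemma CLh_twisted_periodic_normal_pds:
  assumes "f \<in> CLh h"
  shows "twisted_periodic h j (pds (replicate k j) f) \<and> twisted_periodic h j (pds (replicate (Suc k) j) f)"
  using assms
proof (induction k arbitrary: f)
  case 0
  then show ?case
    using CLhD(3)[OF 0, of 0] by (simp add: Lh_bc_iff)
next
  case (Suc k)
  note f = Suc.prems
  have sm: "smooth_cube f"
    using CLhD(2)[OF f] .
  define R where "R = replicate k j"
  define G where "G = pds R f"
  have G: "smooth_cube G"
    unfolding G_def by (rule smooth_cube_pds[OF sm])
  have IH: "twisted_periodic h j G" "twisted_periodic h j (pd j G)"
    using Suc.IH[OF f] by (simp_all add: G_def R_def)
  have IH_lap: "twisted_periodic h j (pds R (lap f))"
    using Suc.IH[OF CLh_lap[OF f]] by (simp add: R_def)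
  have "pds R (pd i (pd i f)) = pd i (pd i G)" for i
    using pds_mset_eq[OF sm, of "R @ [i, i]" "[i, i] @ R"] by (simp add: pds_append G_def)
  then have "pds R (lap f) = (\<lambda>x. \<Sum>i\<in>UNIV. pd i (pd i G) x)"
    unfolding lap_def by (simp add: pds_sum smooth_cube_pd sm)
  then have "pd j (pd j G) = (\<lambda>x. pds R (lap f) x - (\<Sum>i\<in>UNIV - {j}. pd i (pd i G) x))"
    by (simp add: sum.remove[of UNIV j])
  moreover have "twisted_periodic h j (\<lambda>x. pds R (lap f) x - (\<Sum>i\<in>UNIV - {j}. pd i (pd i G) x))"
    using IH(1) G
    by (intro twisted_periodic_diff[OF IH_lap] twisted_periodic_sum)
      (auto intro!: twisted_periodic_pd_tangential smooth_cube_partially_differentiable smooth_cube_pd)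
  ultimately show ?case
    using IH(2) by (simp add: G_def R_def)
qed

lemma CLh_twisted_periodic_pds:
  assumes f: "f \<in> CLh h"
  shows "twisted_periodic h j (pds js f)"
proof -
  have sm: "smooth_cube f"
    using CLhD(2)[OF f] .
  define n where "n = count (mset js) j"
  have "mset js = mset (filter (\<lambda>i. i \<noteq> j) js @ replicate n j)"
    unfolding n_def by (induction js) auto
  from pds_mset_eq[OF sm this]
  have "pds js f = pds (filter (\<lambda>i. i \<noteq> j) js) (pds (replicate n j) f)"
    by (simp add: pds_append)
  moreover have "twisted_periodic h j (pds (filter (\<lambda>i. i \<noteq> j) js) (pds (replicate n j) f))"
    by (rule twisted_periodic_pds_tangential[OF smooth_cube_pds[OF sm]])
      (use CLh_twisted_periodic_normal_pds[OF f] in auto)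
  ultimately show ?thesis
    by simp
qed

definition Lh_smooth :: "real^'n::finite \<Rightarrow> (real^'n \<Rightarrow> complex) \<Rightarrow> bool" where
  "Lh_smooth h g \<longleftrightarrow> (\<forall>x. x \<notin> cbox 0 1 \<longrightarrow> g x = 0) \<and> smooth_cube g \<and>
     (\<forall>js j. twisted_periodic h j (pds js g))"

lemma Lh_smooth_pds: "Lh_smooth h g \<Longrightarrow> Lh_smooth h (pds js g)"
  unfolding Lh_smooth_def by (auto simp: pds_outside_cube smooth_cube_pds simp flip: pds_append)

lemma Lh_smooth_add: "Lh_smooth h f \<Longrightarrow> Lh_smooth h g \<Longrightarrow> Lh_smooth h (\<lambda>x. f x + g x)"
  unfolding Lh_smooth_def by (auto simp: pds_add smooth_cube_add intro: twisted_periodic_add)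

lemma Lh_smooth_cmult: "Lh_smooth h g \<Longrightarrow> Lh_smooth h (\<lambda>x. c * g x)"
  unfolding Lh_smooth_def by (auto simp: pds_cmult smooth_cube_cmult intro: twisted_periodic_cmult)

lemma Lh_smooth_sum:
  assumes "finite A" "\<And>a. a \<in> A \<Longrightarrow> Lh_smooth h (F a)"
  shows "Lh_smooth h (\<lambda>x. \<Sum>a\<in>A. F a x)"
  using assms
proof (induction A rule: finite_induct)
  case empty
  then show ?case
    by (simp add: Lh_smooth_def smooth_cube_const_0 pds_const_0 twisted_periodic_const_0)
qed (simp add: Lh_smooth_add)

lemma Lh_smooth_lap:
  assumes "Lh_smooth h g"
  shows "Lh_smooth h (lap g)"
proof -
  have "Lh_smooth h (pd j (pd j g))" for j
    using Lh_smooth_pds[OF assms, of "[j, j]"] by simp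
  then show ?thesis
    unfolding lap_def by (simp add: Lh_smooth_sum)
qed

lemma Lh_smooth_lap_pow: "Lh_smooth h g \<Longrightarrow> Lh_smooth h ((lap ^^ k) g)"
  by (induction k) (simp_all add: Lh_smooth_lap)

lemma CLh_iff_Lh_smooth: "f \<in> CLh h \<longleftrightarrow> Lh_smooth h f"
proof
  assume "f \<in> CLh h"
  then show "Lh_smooth h f"
    using CLhD[of f h] CLh_twisted_periodic_pds by (auto simp: Lh_smooth_def)
next
  assume f: "Lh_smooth h f"
  have "Lh_bc h ((lap ^^ k) f)" for k
    using Lh_smooth_lap_pow[OF f, of k] unfolding Lh_bc_iff Lh_smooth_def by (metis pds_Nil pds_Cons)
  with f show "f \<in> CLh h"
    by (simp add: CLh_def Lh_smooth_def)
qed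

section \<open>Constant coefficient operators\<close>

definition index_list :: "('n::finite \<Rightarrow> nat) \<Rightarrow> 'n list" where
  "index_list \<alpha> = foldr (\<lambda>j js. replicate (\<alpha> j) j @ js) coord_list []"

lemma distinct_coord_list: "distinct (coord_list :: 'n::finite list)"
  and set_coord_list: "set (coord_list :: 'n::finite list) = UNIV"
proof -
  have "\<exists>xs. distinct xs \<and> set xs = (UNIV :: 'n set)"
    using finite_distinct_list[of "UNIV :: 'n set"] by auto
  then have "distinct (coord_list :: 'n list) \<and> set (coord_list :: 'n list) = UNIV"
    unfolding coord_list_def by (rule someI_ex)
  then show "distinct (coord_list :: 'n list)" "set (coord_list :: 'n list) = UNIV"
    by simp_all
qed

lemma dpow_eq_pds: "dpow \<alpha> f = pds (index_list \<alpha>) f"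
proof -
  have "foldr (\<lambda>j g. (pd j ^^ \<alpha> j) g) cs f = pds (foldr (\<lambda>j js. replicate (\<alpha> j) j @ js) cs []) f" for cs
  proof (induction cs)
    case (Cons c cs)
    have "(pd c ^^ n) g = pds (replicate n c) g" for n g
      by (induction n) simp_all
    with Cons show ?case
      by (simp add: pds_append)
  qed simp
  then show ?thesis
    unfolding dpow_def index_list_def .
qed

lemma length_index_list: "length (index_list \<alpha>) = (\<Sum>j\<in>UNIV. \<alpha> j)"
proof -
  have "length (foldr (\<lambda>j js. replicate (\<alpha> j) j @ js) cs []) = sum_list (map \<alpha> cs)" for cs
    by (induction cs) simp_all
  then show ?thesis
    unfolding index_list_def
    by (simp add: sum_list_distinct_conv_sum_set distinct_coord_list set_coord_list)
qed

lemma prod_list_index_list: "prod_list (map g (index_list \<alpha>)) = (\<Prod>j\<in>UNIV. g j ^ \<alpha> j)"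
proof -
  have "prod_list (map g (foldr (\<lambda>j js. replicate (\<alpha> j) j @ js) cs [])) =
      prod_list (map (\<lambda>j. g j ^ \<alpha> j) cs)" for cs
    by (induction cs) simp_all
  then show ?thesis
    unfolding index_list_def
    by (simp add: prod.distinct_set_conv_list distinct_coord_list flip: set_coord_list)
qed

lemma finite_multi_indices: "finite {\<alpha>::'n::finite \<Rightarrow> nat. (\<Sum>j\<in>UNIV. \<alpha> j) \<le> m}"
proof (rule finite_subset)
  show "{\<alpha>::'n \<Rightarrow> nat. (\<Sum>j\<in>UNIV. \<alpha> j) \<le> m} \<subseteq> Pi\<^sub>E UNIV (\<lambda>_. {..m})"
  proof
    fix \<alpha> :: "'n \<Rightarrow> nat" assume "\<alpha> \<in> {\<alpha>. (\<Sum>j\<in>UNIV. \<alpha> j) \<le> m}"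
    then have "\<alpha> j \<le> m" for j
      using member_le_sum[of j UNIV \<alpha>] by auto
    then show "\<alpha> \<in> Pi\<^sub>E UNIV (\<lambda>_. {..m})"
      by (simp add: PiE_UNIV_domain)
  qed
qed (simp add: finite_PiE)

lemma PDO_eq_pds: "PDO m a f = (\<lambda>x. \<Sum>\<alpha>\<in>{\<alpha>. (\<Sum>j\<in>UNIV. \<alpha> j) \<le> m}. a \<alpha> * pds (index_list \<alpha>) f x)"
  by (simp add: PDO_def dpow_eq_pds)

lemma pds_PDO:
  assumes "smooth_cube f"
  shows "pds js (PDO m a f) =
    (\<lambda>x. \<Sum>\<alpha>\<in>{\<alpha>. (\<Sum>j\<in>UNIV. \<alpha> j) \<le> m}. a \<alpha> * pds (js @ index_list \<alpha>) f x)"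
  unfolding PDO_eq_pds using assms
  by (simp add: pds_sum finite_multi_indices smooth_cube_cmult smooth_cube_pds pds_cmult pds_append)

lemma Lh_smooth_PDO: "Lh_smooth h f \<Longrightarrow> Lh_smooth h (PDO m a f)"
  unfolding PDO_eq_pds
  by (intro Lh_smooth_sum finite_multi_indices Lh_smooth_cmult Lh_smooth_pds)

lemma PDO_add:
  assumes "smooth_cube f" "smooth_cube g"
  shows "PDO m a (\<lambda>x. f x + g x) = (\<lambda>x. PDO m a f x + PDO m a g x)"
  unfolding PDO_eq_pds pds_add[OF assms] by (simp add: distrib_left sum.distrib)

lemma PDO_cmult:
  assumes "smooth_cube f"
  shows "PDO m a (\<lambda>x. c * f x) = (\<lambda>x. c * PDO m a f x)"
  unfolding PDO_eq_pds pds_cmult[OF assms] by (simp add: sum_distrib_left mult.left_commute)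

lemma bdd_above_seminorm_k:
  fixes f :: "real^'n::finite \<Rightarrow> complex"
  assumes "smooth_cube f"
  shows "bdd_above {norm (pds js f x) | js x. length js \<le> k \<and> x \<in> cbox 0 1}"
proof -
  let ?L = "{js :: 'n list. length js \<le> k}"
  have "finite ?L"
    using finite_lists_length_le[of "UNIV :: 'n set" k] by simp
  have "\<exists>B>0. \<forall>x\<in>cbox 0 1. norm (pds js f x) \<le> B" for js
    using compact_imp_bounded[OF compact_continuous_image[OF
          smooth_cube_continuous_on[OF smooth_cube_pds[OF assms]] compact_cbox]]
    by (auto simp: bounded_pos)
  then obtain B where B: "\<And>js. B js > 0" "\<And>js x. x \<in> cbox 0 1 \<Longrightarrow> norm (pds js f x) \<le> B js"
    by metis
  have B_le: "B js \<le> sum B ?L" if "length js \<le> k" for js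
    using that B(1) \<open>finite ?L\<close> by (intro member_le_sum) (auto intro: less_imp_le)
  show ?thesis
  proof (rule bdd_aboveI)
    fix y assume "y \<in> {norm (pds js f x) | js x. length js \<le> k \<and> x \<in> cbox 0 1}"
    then obtain js x where "y = norm (pds js f x)" "length js \<le> k" "x \<in> cbox 0 1"
      by blast
    then show "y \<le> sum B ?L"
      using B(2) B_le by (metis order_trans)
  qed
qed

lemma norm_pds_le_seminorm_k:
  assumes "smooth_cube f" "length js \<le> k" "x \<in> cbox 0 1"
  shows "norm (pds js f x) \<le> seminorm_k k f"
  unfolding seminorm_k_def using assms by (intro cSup_upper bdd_above_seminorm_k) blast+

lemma seminorm_k_PDO_le:
  fixes f :: "real^'n::finite \<Rightarrow> complex"
  assumes f: "smooth_cube f"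
  shows "seminorm_k k (PDO m a f) \<le>
    (\<Sum>\<alpha>\<in>{\<alpha>. (\<Sum>j\<in>UNIV. \<alpha> j) \<le> m}. norm (a \<alpha>)) * seminorm_k (k + m) f"
  unfolding seminorm_k_def[of k]
proof (rule cSup_least)
  have "(0::real^'n) \<in> cbox 0 1"
    by (simp add: mem_box_cart)
  then show "{norm (pds js (PDO m a f) x) | js x. length js \<le> k \<and> x \<in> cbox 0 1} \<noteq> {}"
    by (intro ex_in_conv[THEN iffD1] exI[of _ "norm (pds [] (PDO m a f) 0)"]) fastforce
next
  let ?A = "{\<alpha>::'n \<Rightarrow> nat. (\<Sum>j\<in>UNIV. \<alpha> j) \<le> m}"
  fix y assume "y \<in> {norm (pds js (PDO m a f) x) | js x. length js \<le> k \<and> x \<in> cbox 0 1}"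
  then obtain js x where y: "y = norm (pds js (PDO m a f) x)" "length js \<le> k" "x \<in> cbox 0 1"
    by blast
  have "y \<le> (\<Sum>\<alpha>\<in>?A. norm (a \<alpha> * pds (js @ index_list \<alpha>) f x))"
    unfolding y(1) pds_PDO[OF f] by (rule norm_sum)
  also have "\<dots> \<le> (\<Sum>\<alpha>\<in>?A. norm (a \<alpha>) * seminorm_k (k + m) f)"
    using y(2,3) by (intro sum_mono)
      (auto simp: norm_mult length_index_list intro!: mult_left_mono norm_pds_le_seminorm_k[OF f])
  finally show "y \<le> (\<Sum>\<alpha>\<in>?A. norm (a \<alpha>)) * seminorm_k (k + m) f"
    by (simp add: sum_distrib_right)
qed

section \<open>Integrals of derivatives of periodic functions\<close>

definition lower_slab :: "'n::finite \<Rightarrow> real \<Rightarrow> (real^'n) set" where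
  "lower_slab j c = cbox 0 (\<chi> k. if k = j then c else 1)"

definition upper_slab :: "'n::finite \<Rightarrow> real \<Rightarrow> (real^'n) set" where
  "upper_slab j c = cbox (\<chi> k. if k = j then c else 0) 1"

lemma mem_lower_slab:
  assumes "c \<le> 1"
  shows "x \<in> lower_slab j c \<longleftrightarrow> x \<in> cbox 0 1 \<and> x$j \<le> c"
proof -
  have "x$k \<le> (if k = j then c else 1) \<longleftrightarrow> x$k \<le> 1 \<and> (k = j \<longrightarrow> x$k \<le> c)" for k
    using assms by auto
  then show ?thesis
    unfolding lower_slab_def mem_box_cart by (auto simp: all_conj_distrib)
qed

lemma mem_upper_slab:
  assumes "0 \<le> c"
  shows "x \<in> upper_slab j c \<longleftrightarrow> x \<in> cbox 0 1 \<and> c \<le> x$j"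
proof -
  have "(if k = j then c else 0) \<le> x$k \<longleftrightarrow> 0 \<le> x$k \<and> (k = j \<longrightarrow> c \<le> x$k)" for k
    using assms by auto
  then show ?thesis
    unfolding upper_slab_def mem_box_cart by (auto simp: all_conj_distrib)
qed

lemma content_lower_slab:
  assumes "0 \<le> c"
  shows "Henstock_Kurzweil_Integration.content (lower_slab j c) = c"
proof -
  have "0 \<in> lower_slab j c"
    using assms by (simp add: lower_slab_def mem_box_cart)
  then show ?thesis
    unfolding lower_slab_def by (subst content_cbox_cart) auto
qed

lemma content_upper_slab:
  assumes "c \<le> 1"
  shows "Henstock_Kurzweil_Integration.content (upper_slab j c) = 1 - c"
proof -
  have "1 \<in> upper_slab j c"
    using assms by (simp add: upper_slab_def mem_box_cart)
  moreover have "(\<Prod>k\<in>UNIV. 1 - (if k = j then c else 0)) = 1 - c"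
    by (simp add: if_distrib[of "\<lambda>t. 1 - t"] prod.If_cases)
  ultimately show ?thesis
    unfolding upper_slab_def by (subst content_cbox_cart) auto
qed

lemma integral_cube_split_slabs:
  fixes F :: "real^'n::finite \<Rightarrow> complex"
  assumes "F integrable_on cbox 0 1" "0 \<le> c" "c \<le> 1"
  shows "integral (cbox 0 1) F = integral (lower_slab j c) F + integral (upper_slab j c) F"
proof -
  have "cbox 0 1 \<inter> {x. x \<bullet> axis j 1 \<le> c} = lower_slab j c"
    "cbox 0 1 \<inter> {x. x \<bullet> axis j 1 \<ge> c} = upper_slab j c"
    using assms(2,3) by (auto simp: mem_lower_slab mem_upper_slab inner_axis)
  moreover have "axis j 1 \<in> (Basis :: (real^'n) set)"
    by (auto simp: Basis_vec_def)
  ultimately show ?thesis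
    using integral_split[OF assms(1)] by metis
qed

lemma has_integral_shift_lower_slab:
  fixes F :: "real^'n::finite \<Rightarrow> complex"
  assumes "F integrable_on upper_slab j s"
  shows "((\<lambda>x. F (x + s *\<^sub>R axis j 1)) has_integral integral (upper_slab j s) F) (lower_slab j (1 - s))"
proof -
  have "(\<chi> k. if k = j then s else 0) - s *\<^sub>R axis j 1 = 0"
    "1 - s *\<^sub>R axis j 1 = (\<chi> k. if k = j then 1 - s else 1)"
    by (simp_all add: vec_eq_iff axis_def)
  with has_integral_shift_cbox[OF integrable_integral[OF assms[unfolded upper_slab_def]]]
  show ?thesis
    unfolding lower_slab_def upper_slab_def by metis
qed

lemma has_integral_shift_upper_slab:
  fixes F :: "real^'n::finite \<Rightarrow> complex"
  assumes "F integrable_on lower_slab j s"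
  shows "((\<lambda>x. F (x + (s - 1) *\<^sub>R axis j 1)) has_integral integral (lower_slab j s) F)
    (upper_slab j (1 - s))"
proof -
  have "0 - (s - 1) *\<^sub>R axis j 1 = (\<chi> k. if k = j then 1 - s else 0)"
    "(\<chi> k. if k = j then s else 1) - (s - 1) *\<^sub>R axis j 1 = 1"
    by (simp_all add: vec_eq_iff axis_def)
  with has_integral_shift_cbox[OF integrable_integral[OF assms[unfolded lower_slab_def]]]
  show ?thesis
    unfolding lower_slab_def upper_slab_def by metis
qed

text \<open>
  Translating the cube by \<open>s\<close> in direction \<open>j\<close> and wrapping the part that leaves it around
  does not change the integral of \<open>F\<close>; this rewrites \<open>s \<integral> F'\<close> as an integral of the errors of
  first order Taylor expansions.\<close>

lemma scaled_integral_eq_increments: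
  fixes F F' :: "real^'n::finite \<Rightarrow> complex"
  assumes cF: "continuous_on (cbox 0 1) F" and cF': "continuous_on (cbox 0 1) F'"
    and s: "0 \<le> s" "s \<le> 1"
  shows "s *\<^sub>R integral (cbox 0 1) F' =
      integral (lower_slab j (1 - s)) (\<lambda>x. s *\<^sub>R F' x - (F (x + s *\<^sub>R axis j 1) - F x)) +
      integral (upper_slab j (1 - s)) (\<lambda>x. s *\<^sub>R F' x - (F (x + (s - 1) *\<^sub>R axis j 1) - F x))"
proof -
  let ?A = "lower_slab j (1 - s)" and ?B = "upper_slab j (1 - s)"
  have int: "G integrable_on lower_slab j c" "G integrable_on upper_slab j c"
    if "continuous_on (cbox 0 1) G" "0 \<le> c" "c \<le> 1" for G :: "real^'n \<Rightarrow> complex" and c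
  proof -
    have "lower_slab j c \<subseteq> cbox 0 1" "upper_slab j c \<subseteq> cbox 0 1"
      using that by (auto simp: mem_lower_slab mem_upper_slab)
    then show "G integrable_on lower_slab j c" "G integrable_on upper_slab j c"
      unfolding lower_slab_def upper_slab_def
      by (auto intro!: integrable_continuous continuous_on_subset[OF that(1)])
  qed
  have "((\<lambda>x. s *\<^sub>R F' x - (F (x + s *\<^sub>R axis j 1) - F x)) has_integral
      s *\<^sub>R integral ?A F' - (integral (upper_slab j s) F - integral ?A F)) ?A"
    using s cF cF'
    by (intro has_integral_diff has_integral_cmul has_integral_shift_lower_slab
        has_integral_integral[THEN iffD1] int) auto
  note A = integral_unique[OF this]
  have "((\<lambda>x. s *\<^sub>R F' x - (F (x + (s - 1) *\<^sub>R axis j 1) - F x)) has_integral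
      s *\<^sub>R integral ?B F' - (integral (lower_slab j s) F - integral ?B F)) ?B"
    using s cF cF'
    by (intro has_integral_diff has_integral_cmul has_integral_shift_upper_slab
        has_integral_integral[THEN iffD1] int) auto
  note B = integral_unique[OF this]
  have "integral (cbox 0 1) F = integral (lower_slab j s) F + integral (upper_slab j s) F"
    "integral (cbox 0 1) F = integral ?A F + integral ?B F"
    "integral (cbox 0 1) F' = integral ?A F' + integral ?B F'"
    using s cF cF' by (auto intro!: integral_cube_split_slabs integrable_continuous)
  then have "integral (upper_slab j s) F = integral ?A F + integral ?B F - integral (lower_slab j s) F"
    "integral (cbox 0 1) F' = integral ?A F' + integral ?B F'"
    by (simp_all add: algebra_simps)
  then show ?thesis
    unfolding A B by (simp add: algebra_simps)
qed

lemma norm_integral_le: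
  fixes f :: "'a::euclidean_space \<Rightarrow> 'b::real_normed_vector"
  assumes "0 \<le> B" "\<And>x. x \<in> cbox a b \<Longrightarrow> norm (f x) \<le> B"
  shows "norm (integral (cbox a b) f) \<le> B * Henstock_Kurzweil_Integration.content (cbox a b)"
  \<comment> \<open>no integrability needed: the integral of a non-integrable function is \<open>0\<close>\<close>
  using assms integrable_bound[OF assms(1) _ assms(2)] not_integrable_integral[of f "cbox a b"]
  by (cases "f integrable_on cbox a b") auto

lemma norm_integral_lower_slab_le:
  fixes f :: "real^'n::finite \<Rightarrow> 'a::real_normed_vector"
  assumes "0 \<le> B" "0 \<le> c" "\<And>x. x \<in> lower_slab j c \<Longrightarrow> norm (f x) \<le> B"
  shows "norm (integral (lower_slab j c) f) \<le> B * c"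
proof -
  have "norm (integral (lower_slab j c) f) \<le> B * Henstock_Kurzweil_Integration.content (lower_slab j c)"
    using assms(1,3) unfolding lower_slab_def by (rule norm_integral_le)
  then show ?thesis
    by (simp add: content_lower_slab[OF assms(2)])
qed

lemma norm_integral_upper_slab_le:
  fixes f :: "real^'n::finite \<Rightarrow> 'a::real_normed_vector"
  assumes "0 \<le> B" "c \<le> 1" "\<And>x. x \<in> upper_slab j c \<Longrightarrow> norm (f x) \<le> B"
  shows "norm (integral (upper_slab j c) f) \<le> B * (1 - c)"
proof -
  have "norm (integral (upper_slab j c) f) \<le> B * Henstock_Kurzweil_Integration.content (upper_slab j c)"
    using assms(1,3) unfolding upper_slab_def by (rule norm_integral_le)
  then show ?thesis
    by (simp add: content_upper_slab[OF assms(2)])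
qed

lemma norm_increment_error_le:
  fixes F :: "real^'n::finite \<Rightarrow> complex"
  assumes D: "partially_differentiable F"
    and modulus: "\<And>x y. x \<in> cbox 0 1 \<Longrightarrow> y \<in> cbox 0 1 \<Longrightarrow> dist y x \<le> s \<Longrightarrow>
      norm (pd j F y - pd j F x) \<le> \<epsilon>"
    and x: "x \<in> lower_slab j (1 - s)" and s: "0 \<le> s"
  shows "norm (s *\<^sub>R pd j F x - (F (x + s *\<^sub>R axis j 1) - F x)) \<le> \<epsilon> * s"
proof -
  have xC: "x \<in> cbox 0 1" and "x$j \<le> 1 - s"
    using x s by (simp_all add: mem_lower_slab)
  moreover have "0 \<le> x$j"
    using xC by (simp add: mem_box_cart)
  ultimately have xC: "x \<in> cbox 0 1" "x + s *\<^sub>R axis j 1 \<in> cbox 0 1"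
    using s add_axis_in_cube[OF xC, of j s] by simp_all
  have "norm (F (x + s *\<^sub>R axis j 1) - F x - s *\<^sub>R pd j F x) \<le> \<epsilon> * \<bar>s\<bar>"
    using modulus[OF xC(1)] s
    by (intro norm_increment_along_axis_le[OF D xC]) (auto simp: dist_norm closed_segment_eq_real_ivl)
  then show ?thesis
    using s by (simp add: norm_minus_commute algebra_simps)
qed

lemma norm_wraparound_increment_le:
  fixes F :: "real^'n::finite \<Rightarrow> complex"
  assumes D: "partially_differentiable F"
    and per: "\<And>x. x \<in> cbox 0 1 \<Longrightarrow> x$j = 0 \<Longrightarrow> F (x + axis j 1) = F x"
    and M: "\<And>y. y \<in> cbox 0 1 \<Longrightarrow> norm (pd j F y) \<le> M"
    and x: "x \<in> upper_slab j (1 - s)" and s: "0 \<le> s" "s \<le> 1"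
  shows "norm (F (x + (s - 1) *\<^sub>R axis j 1) - F x) \<le> 2 * M * s"
proof -
  let ?e = "axis j 1 :: real^'n"
  have xC: "x \<in> cbox 0 1" and xj: "1 - s \<le> x$j" "x$j \<le> 1"
    using x s by (simp_all add: mem_upper_slab mem_box_cart)
  have M0: "0 \<le> M"
    using M[OF xC] norm_ge_zero order_trans by blast
  define x0 where "x0 = x - (x$j) *\<^sub>R ?e"
  have x0: "x0 \<in> cbox 0 1" "x0$j = 0"
    using xC by (auto simp: x0_def mem_box_cart axis_def)
  have e1: "x + (s - 1) *\<^sub>R ?e = x0 + (x$j + s - 1) *\<^sub>R ?e" and e2: "x + (1 - x$j) *\<^sub>R ?e = x0 + ?e"
    by (simp_all add: x0_def vec_eq_iff axis_def algebra_simps)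
  have "x0 + (x$j + s - 1) *\<^sub>R ?e \<in> cbox 0 1"
    using x0 xj s unfolding mem_box_cart by (auto simp: axis_def)
  then have "norm (F (x0 + (x$j + s - 1) *\<^sub>R ?e) - F x0) \<le> M * \<bar>x$j + s - 1\<bar>"
    using norm_increment_along_axis_le[OF D x0(1), of "x$j + s - 1" j 0 M] M by simp
  moreover have "x + (1 - x$j) *\<^sub>R ?e \<in> cbox 0 1"
    using x0 unfolding e2 mem_box_cart by (auto simp: axis_def)
  then have "norm (F (x + (1 - x$j) *\<^sub>R ?e) - F x) \<le> M * \<bar>1 - x$j\<bar>"
    using norm_increment_along_axis_le[OF D xC, of "1 - x$j" j 0 M] M by simp
  moreover have "M * \<bar>x$j + s - 1\<bar> \<le> M * s" "M * \<bar>1 - x$j\<bar> \<le> M * s"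
    using xj M0 by (simp_all add: mult_left_mono)
  moreover have "F (x + (1 - x$j) *\<^sub>R ?e) = F x0"
    unfolding e2 by (rule per[OF x0])
  then have "F (x + (s - 1) *\<^sub>R ?e) - F x =
      (F (x0 + (x$j + s - 1) *\<^sub>R ?e) - F x0) + (F (x + (1 - x$j) *\<^sub>R ?e) - F x)"
    by (simp add: e1)
  then have "norm (F (x + (s - 1) *\<^sub>R ?e) - F x) \<le>
      norm (F (x0 + (x$j + s - 1) *\<^sub>R ?e) - F x0) + norm (F (x + (1 - x$j) *\<^sub>R ?e) - F x)"
    by (simp only: norm_triangle_ineq)
  ultimately show ?thesis
    by linarith
qed

lemma norm_wraparound_error_le:
  fixes F :: "real^'n::finite \<Rightarrow> complex"
  assumes D: "partially_differentiable F"
    and per: "\<And>x. x \<in> cbox 0 1 \<Longrightarrow> x$j = 0 \<Longrightarrow> F (x + axis j 1) = F x"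
    and M: "\<And>y. y \<in> cbox 0 1 \<Longrightarrow> norm (pd j F y) \<le> M"
    and x: "x \<in> upper_slab j (1 - s)" and s: "0 \<le> s" "s \<le> 1"
  shows "norm (s *\<^sub>R pd j F x - (F (x + (s - 1) *\<^sub>R axis j 1) - F x)) \<le> 3 * M * s"
proof -
  have "norm (s *\<^sub>R pd j F x) \<le> s * M"
    using M x s by (auto simp: mem_upper_slab intro: mult_left_mono)
  moreover have "norm (F (x + (s - 1) *\<^sub>R axis j 1) - F x) \<le> 2 * M * s"
    by (rule norm_wraparound_increment_le[OF D per M x s])
  ultimately have "norm (s *\<^sub>R pd j F x - (F (x + (s - 1) *\<^sub>R axis j 1) - F x)) \<le> s * M + 2 * M * s"
    using norm_triangle_ineq4[of "s *\<^sub>R pd j F x" "F (x + (s - 1) *\<^sub>R axis j 1) - F x"] by linarith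
  then show ?thesis
    by (simp add: algebra_simps)
qed

lemma norm_integral_pd_periodic_le:
  fixes F :: "real^'n::finite \<Rightarrow> complex"
  assumes cF: "continuous_on (cbox 0 1) F" and cF': "continuous_on (cbox 0 1) (pd j F)"
    and D: "partially_differentiable F"
    and per: "\<And>x. x \<in> cbox 0 1 \<Longrightarrow> x$j = 0 \<Longrightarrow> F (x + axis j 1) = F x"
    and M: "\<And>x. x \<in> cbox 0 1 \<Longrightarrow> norm (pd j F x) \<le> M"
    and modulus: "\<And>x y. x \<in> cbox 0 1 \<Longrightarrow> y \<in> cbox 0 1 \<Longrightarrow> dist y x \<le> s \<Longrightarrow>
      norm (pd j F y - pd j F x) \<le> \<epsilon>"
    and s: "0 < s" "s \<le> 1" "3 * M * s \<le> \<epsilon>"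
  shows "norm (integral (cbox 0 1) (pd j F)) \<le> 2 * \<epsilon>"
proof -
  let ?A = "lower_slab j (1 - s)" and ?B = "upper_slab j (1 - s)"
  let ?gA = "\<lambda>x. s *\<^sub>R pd j F x - (F (x + s *\<^sub>R axis j 1) - F x)"
  let ?gB = "\<lambda>x. s *\<^sub>R pd j F x - (F (x + (s - 1) *\<^sub>R axis j 1) - F x)"
  have "(0::real^'n) \<in> cbox 0 1"
    by (simp add: mem_box_cart)
  then have "0 \<le> M"
    using M norm_ge_zero order_trans by metis
  then have "0 \<le> 3 * M * s"
    using s by simp
  then have "0 \<le> \<epsilon>"
    using s by linarith
  have "norm (integral ?A ?gA) \<le> (\<epsilon> * s) * (1 - s)"
    using \<open>0 \<le> \<epsilon>\<close> s norm_increment_error_le[OF D modulus]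
    by (intro norm_integral_lower_slab_le) auto
  also have "\<dots> \<le> \<epsilon> * s"
    using \<open>0 \<le> \<epsilon>\<close> s by (intro mult_left_le) auto
  finally have IA: "norm (integral ?A ?gA) \<le> \<epsilon> * s" .
  have "norm (integral ?B ?gB) \<le> (3 * M * s) * (1 - (1 - s))"
    using \<open>0 \<le> 3 * M * s\<close> s norm_wraparound_error_le[OF D per M]
    by (intro norm_integral_upper_slab_le) auto
  also have "\<dots> = (3 * M * s) * s"
    by simp
  also have "\<dots> \<le> \<epsilon> * s"
    using s by (intro mult_right_mono) auto
  finally have IB: "norm (integral ?B ?gB) \<le> \<epsilon> * s" .
  have "s * norm (integral (cbox 0 1) (pd j F)) = norm (s *\<^sub>R integral (cbox 0 1) (pd j F))"
    using s by simp
  also have "\<dots> = norm (integral ?A ?gA + integral ?B ?gB)"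
    using scaled_integral_eq_increments[OF cF cF' less_imp_le[OF s(1)] s(2), of j] by (simp only:)
  also have "\<dots> \<le> \<epsilon> * s + \<epsilon> * s"
    using norm_triangle_ineq[of "integral ?A ?gA" "integral ?B ?gB"] IA IB by simp
  also have "\<dots> = s * (2 * \<epsilon>)"
    by simp
  finally show ?thesis
    using s by (simp add: mult_le_cancel_left_pos)
qed

lemma integral_pd_periodic_eq_0:
  fixes F :: "real^'n::finite \<Rightarrow> complex"
  assumes cF: "continuous_on (cbox 0 1) F" and cF': "continuous_on (cbox 0 1) (pd j F)"
    and D: "partially_differentiable F"
    and per: "\<And>x. x \<in> cbox 0 1 \<Longrightarrow> x$j = 0 \<Longrightarrow> F (x + axis j 1) = F x"
  shows "integral (cbox 0 1) (pd j F) = 0"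
proof -
  obtain M where M: "M > 0" "\<And>x. x \<in> cbox 0 1 \<Longrightarrow> norm (pd j F x) \<le> M"
    using compact_imp_bounded[OF compact_continuous_image[OF cF' compact_cbox]]
    by (auto simp: bounded_pos)
  have small: "norm (integral (cbox 0 1) (pd j F)) \<le> 2 * \<epsilon>" if \<epsilon>: "\<epsilon> > 0" for \<epsilon>
  proof -
    obtain \<delta> where \<delta>: "\<delta> > 0" "\<And>x y. x \<in> cbox 0 1 \<Longrightarrow> y \<in> cbox 0 1 \<Longrightarrow> dist y x < \<delta> \<Longrightarrow>
        dist (pd j F y) (pd j F x) < \<epsilon>"
      using compact_uniformly_continuous[OF cF' compact_cbox] \<epsilon>
      unfolding uniformly_continuous_on_def by metis
    define s where "s = min (1/2) (min (\<delta>/2) (\<epsilon> / (3 * M)))"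
    have "0 < s" "s \<le> 1/2" "s \<le> \<delta>/2" "s \<le> \<epsilon> / (3 * M)"
      using \<delta> \<epsilon> M by (simp_all add: s_def)
    then have s: "0 < s" "s \<le> 1" "s < \<delta>" "3 * M * s \<le> \<epsilon>"
      using \<delta> M by (simp_all add: pos_le_divide_eq algebra_simps)
    show ?thesis
    proof (rule norm_integral_pd_periodic_le[OF cF cF' D per M(2) _ s(1,2,4)])
      fix x y :: "real^'n" assume "x \<in> cbox 0 1" "y \<in> cbox 0 1" "dist y x \<le> s"
      with \<delta>(2)[of x y] s show "norm (pd j F y - pd j F x) \<le> \<epsilon>"
        by (simp add: dist_norm)
    qed
  qed
  have "norm (integral (cbox 0 1) (pd j F)) \<le> 0"
  proof (rule field_le_epsilon)
    fix e :: real assume "0 < e"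
    then show "norm (integral (cbox 0 1) (pd j F)) \<le> 0 + e"
      using small[of "e / 2"] by simp
  qed
  then show ?thesis
    by simp
qed

section \<open>The \<open>L\<^sub>h\<close>-Fourier transform of derivatives\<close>

definition w_Lh :: "real^'n::finite \<Rightarrow> int^'n \<Rightarrow> real^'n \<Rightarrow> complex" where
  "w_Lh h \<xi> x = cnj (v_Lh h \<xi> x)"

definition mu_Lh :: "real^'n::finite \<Rightarrow> int^'n \<Rightarrow> 'n \<Rightarrow> complex" where
  "mu_Lh h \<xi> j = complex_of_real (ln (h$j)) + complex_of_real (2 * pi * of_int (\<xi>$j)) * \<i>"

lemma FT_Lh_eq_integral_cube: "FT_Lh h g \<xi> = integral (cbox 0 1) (\<lambda>x. g x * w_Lh h \<xi> x)"
  unfolding FT_Lh_def w_Lh_def by (rule integral_open_interval)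

lemma hpow_minus_add_axis:
  fixes h :: "real^'n::finite"
  shows "hpow h (- (x + t *\<^sub>R axis j 1)) = hpow h (- x) * (h$j) powr (- t)"
proof -
  have "hpow h (- (x + t *\<^sub>R axis j 1)) =
      (\<Prod>k\<in>UNIV. (h$k) powr (- x$k) * (if k = j then (h$j) powr (- t) else 1))"
    unfolding hpow_def by (rule prod.cong) (auto simp: axis_def powr_add[symmetric])
  then show ?thesis
    by (simp add: prod.distrib hpow_def)
qed

lemma sum_mult_add_axis:
  fixes \<xi> :: "int^'n::finite"
  shows "(\<Sum>k\<in>UNIV. of_int (\<xi>$k) * (x + t *\<^sub>R axis j 1)$k) =
    (\<Sum>k\<in>UNIV. of_int (\<xi>$k) * x$k) + of_int (\<xi>$j) * t"
proof -
  have "(\<Sum>k\<in>UNIV. of_int (\<xi>$k) * (x + t *\<^sub>R axis j 1)$k) =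
      (\<Sum>k\<in>UNIV. of_int (\<xi>$k) * x$k + (if k = j then of_int (\<xi>$j) * t else 0))"
    by (rule sum.cong) (auto simp: axis_def algebra_simps)
  then show ?thesis
    by (simp add: sum.distrib)
qed

lemma exp_minus_mu_Lh:
  assumes "h$j > 0"
  shows "exp (- mu_Lh h \<xi> j * complex_of_real t) =
    complex_of_real ((h$j) powr (- t)) * cis (- (2 * pi * (of_int (\<xi>$j) * t)))"
proof -
  have "- mu_Lh h \<xi> j * complex_of_real t =
      complex_of_real (- t * ln (h$j)) + \<i> * complex_of_real (- (2 * pi * (of_int (\<xi>$j) * t)))"
    by (simp add: mu_Lh_def algebra_simps)
  then show ?thesis
    using assms by (simp only: exp_add exp_of_real cis_conv_exp) (simp add: powr_def)
qed

lemma w_Lh_add_axis: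
  assumes "h$j > 0"
  shows "w_Lh h \<xi> (x + t *\<^sub>R axis j 1) = w_Lh h \<xi> x * exp (- mu_Lh h \<xi> j * complex_of_real t)"
  unfolding exp_minus_mu_Lh[OF assms] w_Lh_def v_Lh_def hpow_minus_add_axis sum_mult_add_axis
  by (simp add: cis_cnj distrib_left cis_mult[symmetric] algebra_simps)

lemma w_Lh_add_axis_1:
  assumes "h$j > 0"
  shows "w_Lh h \<xi> (x + axis j 1) = w_Lh h \<xi> x / complex_of_real (h$j)"
proof -
  have "cis (- (2 * pi * of_int (\<xi>$j))) = 1"
    using cis_multiple_2pi[of "of_int (- \<xi>$j)"] by simp
  then have "exp (- mu_Lh h \<xi> j) = complex_of_real (1 / h$j)"
    using exp_minus_mu_Lh[OF assms, of \<xi> 1] assms by (simp add: powr_neg_one)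
  then show ?thesis
    using w_Lh_add_axis[OF assms, of \<xi> x 1] by simp
qed

lemma continuous_on_w_Lh:
  assumes "\<forall>k. h$k > 0"
  shows "continuous_on S (w_Lh h \<xi>)"
proof -
  have "h$k \<noteq> 0" for k
    using assms by (metis less_irrefl)
  then show ?thesis
    unfolding w_Lh_def v_Lh_def hpow_def by (intro continuous_intros) auto
qed

lemma has_vector_derivative_w_Lh_axis_line:
  assumes "h$j > 0"
  shows "((\<lambda>t. w_Lh h \<xi> (y + t *\<^sub>R axis j 1)) has_vector_derivative
    - mu_Lh h \<xi> j * w_Lh h \<xi> (y + r *\<^sub>R axis j 1)) (at r within S)"
proof -
  have "((\<lambda>z. w_Lh h \<xi> y * exp (- mu_Lh h \<xi> j * z)) has_field_derivative
      w_Lh h \<xi> y * (exp (- mu_Lh h \<xi> j * complex_of_real r) * (- mu_Lh h \<xi> j))) (at (complex_of_real r))"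
    by (auto intro!: derivative_eq_intros)
  from has_vector_derivative_real_field[OF this] show ?thesis
    by (simp add: w_Lh_add_axis[OF assms] algebra_simps)
qed

lemma pd_w_Lh:
  assumes "\<forall>k. h$k > 0" "x \<in> cbox 0 1"
  shows "pd j (w_Lh h \<xi>) x = - mu_Lh h \<xi> j * w_Lh h \<xi> x"
  using has_vector_derivative_w_Lh_axis_line[of h j \<xi> x 0] assms by (intro pd_eqI) auto

lemma partially_differentiable_w_Lh:
  assumes "\<forall>k. h$k > 0"
  shows "partially_differentiable (w_Lh h \<xi>)"
  unfolding partially_differentiable_def
  using has_vector_derivative_w_Lh_axis_line[of h _ \<xi> _ 0] assms by (simp add: pd_w_Lh)

lemma FT_Lh_pd:
  assumes h: "\<forall>k. h$k > 0" and g: "smooth_cube g" and per: "twisted_periodic h j g"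
  shows "FT_Lh h (pd j g) \<xi> = mu_Lh h \<xi> j * FT_Lh h g \<xi>"
proof -
  let ?w = "w_Lh h \<xi>" and ?\<mu> = "mu_Lh h \<xi> j"
  let ?F = "\<lambda>x. g x * ?w x" and ?F' = "\<lambda>x. pd j g x * ?w x - ?\<mu> * (g x * ?w x)"
  have Dg: "partially_differentiable g" and Dw: "partially_differentiable ?w"
    using g h by (simp_all add: smooth_cube_partially_differentiable partially_differentiable_w_Lh)
  have cg: "continuous_on (cbox 0 1) g" "continuous_on (cbox 0 1) (pd j g)"
    using g by (simp_all add: smooth_cube_continuous_on smooth_cube_pd)
  have cw: "continuous_on (cbox 0 1) ?w"
    using h by (rule continuous_on_w_Lh)
  have pdF: "pd j ?F x = ?F' x" if "x \<in> cbox 0 1" for x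
    using that h by (simp add: pd_mult[OF Dg Dw] pd_w_Lh algebra_simps)
  have "integral (cbox 0 1) (pd j ?F) = 0"
  proof (rule integral_pd_periodic_eq_0)
    show "continuous_on (cbox 0 1) ?F"
      using cg cw by (intro continuous_intros)
    show "continuous_on (cbox 0 1) (pd j ?F)"
      using cg cw pdF by (subst continuous_on_cong[OF refl pdF]) (auto intro!: continuous_intros)
    show "partially_differentiable ?F"
      by (rule partially_differentiable_mult[OF Dg Dw])
    show "?F (x + axis j 1) = ?F x" if "x \<in> cbox 0 1" "x$j = 0" for x
    proof -
      have "g (x + axis j 1) = complex_of_real (h$j) * g x"
        using per that by (simp add: twisted_periodic_def)
      moreover have "h$j \<noteq> 0"
        using h by (metis less_irrefl)
      ultimately show ?thesis
        using h by (simp add: w_Lh_add_axis_1)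
    qed
  qed
  moreover have "integral (cbox 0 1) (pd j ?F) = integral (cbox 0 1) ?F'"
    using pdF by (rule integral_cong)
  ultimately have "integral (cbox 0 1) ?F' = 0"
    by simp
  moreover have "integral (cbox 0 1) ?F' =
      integral (cbox 0 1) (\<lambda>x. pd j g x * ?w x) - ?\<mu> * integral (cbox 0 1) ?F"
    using cg cw
    by (simp add: integral_diff integrable_continuous continuous_intros integrable_on_cmult_left
        flip: integral_mult_right)
  ultimately show ?thesis
    unfolding FT_Lh_eq_integral_cube by simp
qed

lemma FT_Lh_pds:
  assumes h: "\<forall>k. h$k > 0" and f: "f \<in> CLh h"
  shows "FT_Lh h (pds js f) \<xi> = prod_list (map (mu_Lh h \<xi>) js) * FT_Lh h f \<xi>"
proof (induction js)
  case (Cons j js)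
  have "Lh_smooth h (pds js f)"
    using f by (simp add: CLh_iff_Lh_smooth Lh_smooth_pds)
  then have "FT_Lh h (pd j (pds js f)) \<xi> = mu_Lh h \<xi> j * FT_Lh h (pds js f) \<xi>"
    by (intro FT_Lh_pd h) (metis Lh_smooth_def pds_Nil)+
  with Cons show ?case
    by simp
qed simp

definition PDO_symbol :: "nat \<Rightarrow> (('n::finite \<Rightarrow> nat) \<Rightarrow> complex) \<Rightarrow> real^'n \<Rightarrow> int^'n \<Rightarrow> complex" where
  "PDO_symbol m a h \<xi> = (\<Sum>\<alpha>\<in>{\<alpha>. (\<Sum>j\<in>UNIV. \<alpha> j) \<le> m}. a \<alpha> * (\<Prod>j\<in>UNIV. mu_Lh h \<xi> j ^ \<alpha> j))"

lemma FT_Lh_PDO: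
  fixes f :: "real^'n::finite \<Rightarrow> complex"
  assumes h: "\<forall>k. h$k > 0" and f: "f \<in> CLh h"
  shows "FT_Lh h (PDO m a f) \<xi> = PDO_symbol m a h \<xi> * FT_Lh h f \<xi>"
proof -
  let ?A = "{\<alpha>::'n \<Rightarrow> nat. (\<Sum>j\<in>UNIV. \<alpha> j) \<le> m}"
  have "continuous_on (cbox 0 1) (pds (index_list \<alpha>) f)" for \<alpha>
    using f by (simp add: CLh_def smooth_cube_continuous_on smooth_cube_pds)
  then have "continuous_on (cbox 0 1) (\<lambda>x. a \<alpha> * (pds (index_list \<alpha>) f x * w_Lh h \<xi> x))" for \<alpha>
    using h by (intro continuous_intros continuous_on_w_Lh)
  then have "FT_Lh h (PDO m a f) \<xi> = (\<Sum>\<alpha>\<in>?A. a \<alpha> * FT_Lh h (pds (index_list \<alpha>) f) \<xi>)"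
    unfolding FT_Lh_eq_integral_cube PDO_eq_pds
    by (simp add: sum_distrib_right mult.assoc integral_sum[OF finite_multi_indices]
        integrable_continuous flip: integral_mult_right)
  also have "\<dots> = PDO_symbol m a h \<xi> * FT_Lh h f \<xi>"
    by (simp add: PDO_symbol_def FT_Lh_pds[OF h f] prod_list_index_list sum_distrib_right mult.assoc)
  finally show ?thesis .
qed

theorem proposition4p6:
  fixes m :: nat and a :: "('n::finite \<Rightarrow> nat) \<Rightarrow> complex" and h :: "real^'n"
  assumes "\<forall>j. h $ j > 0"
  shows "Lh_multiplier h (PDO m a)"
  unfolding Lh_multiplier_def
proof (intro conjI ballI allI)
  show "PDO m a f \<in> CLh h" if "f \<in> CLh h" for f
    using that by (simp add: CLh_iff_Lh_smooth Lh_smooth_PDO)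
  show "PDO m a (\<lambda>x. f x + g x) = (\<lambda>x. PDO m a f x + PDO m a g x)" if "f \<in> CLh h" "g \<in> CLh h" for f g
    using that by (simp add: CLh_def PDO_add)
  show "PDO m a (\<lambda>x. c * f x) = (\<lambda>x. c * PDO m a f x)" if "f \<in> CLh h" for f c
    using that by (simp add: CLh_def PDO_cmult)
  show "\<exists>k' C. \<forall>f\<in>CLh h. seminorm_k k (PDO m a f) \<le> C * seminorm_k k' f" for k
    using seminorm_k_PDO_le by (fastforce simp: CLh_def)
  show "\<exists>\<sigma>. \<forall>f\<in>CLh h. \<forall>\<xi>. FT_Lh h (PDO m a f) \<xi> = \<sigma> \<xi> * FT_Lh h f \<xi>"
    using FT_Lh_PDO[OF assms] by blast
qed

end
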